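(* (a) $\mathcal{L}\cap\mathcal{U}=\mathcal{C}$. (b) If $A\subseteq\Omega$ satisfies $A\in\mathcal{L}$ and $\Omega\setminus A\in\mathcal{L}$, then $A\in\mathcal{C}$.
   Context: $\Omega$ is the set of infinite sequences $\alpha_0\alpha_1\alpha_2\cdots$ with $\alpha_k\in\{0,1\}$ and $\alpha_0=0$. $\mathcal{C}$ is the collection of cylinder sets, i.e. sets of the form $\{\alpha_0\alpha_1\cdots\in\Omega:\alpha_0\cdots\alpha_n\in E\}$ for some $n\ge1$ and some set $E$ of strings $\alpha_0\cdots\alpha_n$ with $\alpha_0=0$. For $A\subseteq\Omega$ and $n\ge0$, $A^{(n)}=\{\omega\in\Omega:\text{some }\omega'\in A\text{ has the same first }n+1\text{ entries as }\omega\}$. $\mathcal{L}$ is the collection of lower sets, those $A$ with $A=\bigcap_nA^{(n)}$; $\mathcal{U}$ is the collection of upper sets, those $A$ with $A=\bigcup_n\big(\Omega\setminus(\Omega\setminus A)^{(n)}\big)$. *)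

theory Defs
  imports Main
begin

text \<open>Binary digits are encoded as booleans: 0 = False, 1 = True.
  A sequence alpha_0 alpha_1 ... is a function nat => bool.\<close>

definition Omega :: "(nat \<Rightarrow> bool) set" where
  "Omega = {\<omega>. \<omega> 0 = False}"

definition cylinders :: "(nat \<Rightarrow> bool) set set" where
  "cylinders = {A. \<exists>n E. n \<ge> 1 \<and>
      (\<forall>s\<in>E. length s = Suc n \<and> s ! 0 = False) \<and>
      A = {\<omega>\<in>Omega. map \<omega> [0..<Suc n] \<in> E}}"

definition trunc :: "(nat \<Rightarrow> bool) set \<Rightarrow> nat \<Rightarrow> (nat \<Rightarrow> bool) set" where
  "trunc A n = {\<omega>\<in>Omega. \<exists>\<omega>'\<in>A. \<forall>k\<le>n. \<omega>' k = \<omega> k}"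

definition lower_sets :: "(nat \<Rightarrow> bool) set set" where
  "lower_sets = {A. A \<subseteq> Omega \<and> A = (\<Inter>n. trunc A n)}"

definition upper_sets :: "(nat \<Rightarrow> bool) set set" where
  "upper_sets = {A. A \<subseteq> Omega \<and> A = (\<Union>n. Omega - trunc (Omega - A) n)}"

end

theory Submission
  imports Defs
begin

text \<open>Lower sets are the closed and upper sets the open subsets of Cantor space \<open>Omega\<close>,
  where the basic neighbourhoods of \<open>\<omega>\<close> are the sets of sequences sharing a prefix with \<open>\<omega>\<close>.
  A set that is both is locally determined by finite prefixes; by compactness (in the form of
  Koenig's lemma) one prefix length works uniformly, which makes the set a cylinder. For (b),
  the complement of a closed set is open.\<close>

definition agree_upto :: "nat \<Rightarrow> (nat \<Rightarrow> 'a) \<Rightarrow> (nat \<Rightarrow> 'a) \<Rightarrow> bool" where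
  "agree_upto n \<omega> \<omega>' \<longleftrightarrow> (\<forall>k\<le>n. \<omega> k = \<omega>' k)"

lemma agree_upto_refl: "agree_upto n \<omega> \<omega>"
  unfolding agree_upto_def by simp

lemma agree_upto_mono: "agree_upto n \<omega> \<omega>' \<Longrightarrow> m \<le> n \<Longrightarrow> agree_upto m \<omega> \<omega>'"
  unfolding agree_upto_def by simp

lemma agree_upto_fun_upd:
  "agree_upto n \<omega> \<omega>' \<Longrightarrow> agree_upto n (\<omega>(k := a)) (\<omega>'(k := a))"
  unfolding agree_upto_def by simp

lemma map_upt_eq_iff_agree_upto:
  "map \<omega> [0..<Suc n] = map \<omega>' [0..<Suc n] \<longleftrightarrow> agree_upto n \<omega> \<omega>'"
  unfolding agree_upto_def by (auto simp del: upt_Suc simp add: map_eq_conv less_Suc_eq_le)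

lemma branch_through_extendable_prefixes:
  assumes "Q []" and "\<And>s. Q s \<Longrightarrow> \<exists>a. Q (s @ [a])"
  shows "\<exists>\<omega>. \<forall>n. Q (map \<omega> [0..<n])"
proof -
  define f where "f = rec_nat [] (\<lambda>_ s. s @ [SOME a. Q (s @ [a])])"
  define \<omega> where "\<omega> n = (SOME a. Q (f n @ [a]))" for n
  have f_0: "f 0 = []" and f_Suc: "f (Suc n) = f n @ [\<omega> n]" for n
    by (simp_all add: f_def \<omega>_def)
  have "f n = map \<omega> [0..<n]" for n
    by (induction n) (simp_all add: f_0 f_Suc)
  moreover have "Q (f n)" for n
  proof (induction n)
    case 0
    show ?case using assms(1) by (simp add: f_0)
  next
    case (Suc n)
    show ?case
      unfolding f_Suc \<omega>_def using someI_ex[OF assms(2)[OF Suc.IH]] .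
  qed
  ultimately show ?thesis
    by metis
qed

lemma locally_constant_imp_uniformly_constant:
  fixes P :: "(nat \<Rightarrow> 'a::finite) \<Rightarrow> 'b"
  assumes local: "\<And>\<omega>. \<exists>n. \<forall>\<omega>'. agree_upto n \<omega>' \<omega> \<longrightarrow> P \<omega>' = P \<omega>"
  shows "\<exists>N. \<forall>\<omega> \<omega>'. agree_upto N \<omega> \<omega>' \<longrightarrow> P \<omega> = P \<omega>'"
proof (rule ccontr)
  assume not_uniform: "\<not> ?thesis"
  define bad where "bad s \<longleftrightarrow> (\<forall>N. \<exists>\<omega> \<omega>'. (\<forall>k<length s. \<omega> k = s ! k) \<and>
      agree_upto N \<omega> \<omega>' \<and> P \<omega> \<noteq> P \<omega>')" for s :: "'a list"
  have bad_Nil: "bad []"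
    using not_uniform unfolding bad_def by auto
  have bad_extend: "\<exists>a. bad (s @ [a])" if "bad s" for s
  proof (rule ccontr)
    assume "\<nexists>a. bad (s @ [a])"
    then have "\<forall>a. \<exists>N. \<forall>\<omega> \<omega>'. (\<forall>k<Suc (length s). \<omega> k = (s @ [a]) ! k) \<longrightarrow>
        agree_upto N \<omega> \<omega>' \<longrightarrow> P \<omega> = P \<omega>'"
      unfolding bad_def by (metis length_append_singleton)
    then obtain N where N: "\<And>a \<omega> \<omega>'. \<forall>k<Suc (length s). \<omega> k = (s @ [a]) ! k \<Longrightarrow>
        agree_upto (N a) \<omega> \<omega>' \<Longrightarrow> P \<omega> = P \<omega>'"
      by metis
    \<comment> \<open>The alphabet is finite, so one prefix length serves all one-letter extensions of \<open>s\<close>.\<close>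
    obtain \<omega> \<omega>' where \<omega>: "\<forall>k<length s. \<omega> k = s ! k" "agree_upto (Max (range N)) \<omega> \<omega>'"
        "P \<omega> \<noteq> P \<omega>'"
      using \<open>bad s\<close> unfolding bad_def by blast
    have "\<forall>k<Suc (length s). \<omega> k = (s @ [\<omega> (length s)]) ! k"
      using \<omega>(1) by (auto simp: nth_append less_Suc_eq)
    moreover have "agree_upto (N (\<omega> (length s))) \<omega> \<omega>'"
      using \<omega>(2) by (rule agree_upto_mono) simp
    ultimately show False
      using N \<omega>(3) by blast
  qed
  obtain \<omega> where bad_prefix: "\<And>n. bad (map \<omega> [0..<n])"
    using branch_through_extendable_prefixes[of bad] bad_Nil bad_extend by blast
  \<comment> \<open>Yet \<open>P\<close> is locally constant at the limit \<open>\<omega>\<close> of this branch of bad prefixes.\<close>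
  obtain n where n: "\<And>\<omega>'. agree_upto n \<omega>' \<omega> \<Longrightarrow> P \<omega>' = P \<omega>"
    using local by blast
  obtain \<omega>1 \<omega>2 where \<omega>1: "\<forall>k<Suc n. \<omega>1 k = map \<omega> [0..<Suc n] ! k"
      and \<omega>2: "agree_upto n \<omega>1 \<omega>2" and differ: "P \<omega>1 \<noteq> P \<omega>2"
    using bad_prefix[of "Suc n", unfolded bad_def, rule_format, of n]
    by (auto simp del: upt_Suc)
  have near1: "agree_upto n \<omega>1 \<omega>"
    using \<omega>1 unfolding agree_upto_def by (simp del: upt_Suc add: less_Suc_eq_le)
  then have near2: "agree_upto n \<omega>2 \<omega>"
    using \<omega>2 unfolding agree_upto_def by (metis (full_types))
  show False
    using differ n[OF near1] n[OF near2] by simp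
qed

lemma mem_trunc: "\<omega> \<in> trunc A n \<longleftrightarrow> \<omega> \<in> Omega \<and> (\<exists>\<omega>'\<in>A. agree_upto n \<omega>' \<omega>)"
  by (simp add: trunc_def agree_upto_def)

lemma lower_sets_iff:
  "A \<in> lower_sets \<longleftrightarrow>
    A \<subseteq> Omega \<and> (\<forall>\<omega>\<in>Omega - A. \<exists>n. \<forall>\<omega>'\<in>A. \<not> agree_upto n \<omega>' \<omega>)"
  unfolding lower_sets_def set_eq_iff INT_iff mem_trunc using agree_upto_refl by blast

lemma upper_sets_iff:
  "A \<in> upper_sets \<longleftrightarrow>
    A \<subseteq> Omega \<and> (\<forall>\<omega>\<in>A. \<exists>n. \<forall>\<omega>'\<in>Omega. agree_upto n \<omega>' \<omega> \<longrightarrow> \<omega>' \<in> A)"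
  unfolding upper_sets_def set_eq_iff UN_iff Diff_iff mem_trunc using agree_upto_refl by blast

lemma lower_sets_iff_upper_complement:
  "A \<in> lower_sets \<longleftrightarrow> A \<subseteq> Omega \<and> Omega - A \<in> upper_sets"
  unfolding lower_sets_iff upper_sets_iff by blast

definition determined_by :: "nat \<Rightarrow> (nat \<Rightarrow> bool) set \<Rightarrow> bool" where
  "determined_by n A \<longleftrightarrow>
    (\<forall>\<omega>\<in>Omega. \<forall>\<omega>'\<in>Omega. agree_upto n \<omega>' \<omega> \<longrightarrow> (\<omega>' \<in> A \<longleftrightarrow> \<omega> \<in> A))"

definition locally_determined :: "(nat \<Rightarrow> bool) set \<Rightarrow> bool" where
  "locally_determined A \<longleftrightarrow>
    (\<forall>\<omega>\<in>Omega. \<exists>n. \<forall>\<omega>'\<in>Omega. agree_upto n \<omega>' \<omega> \<longrightarrow> (\<omega>' \<in> A \<longleftrightarrow> \<omega> \<in> A))"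

lemma determined_by_mono: "determined_by m A \<Longrightarrow> m \<le> n \<Longrightarrow> determined_by n A"
  unfolding determined_by_def by (meson agree_upto_mono)

lemma determined_imp_locally_determined: "determined_by n A \<Longrightarrow> locally_determined A"
  unfolding determined_by_def locally_determined_def by blast

lemma lower_upper_iff_locally_determined:
  "A \<in> lower_sets \<inter> upper_sets \<longleftrightarrow> A \<subseteq> Omega \<and> locally_determined A"
proof
  assume A: "A \<in> lower_sets \<inter> upper_sets"
  have "\<exists>n. \<forall>\<omega>'\<in>Omega. agree_upto n \<omega>' \<omega> \<longrightarrow> (\<omega>' \<in> A \<longleftrightarrow> \<omega> \<in> A)"
    if "\<omega> \<in> Omega" for \<omega>
  proof (cases "\<omega> \<in> A")
    case True
    then show ?thesis
      using A unfolding Int_iff upper_sets_iff by blast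
  next
    case False
    then show ?thesis
      using A \<open>\<omega> \<in> Omega\<close> unfolding Int_iff lower_sets_iff by blast
  qed
  then show "A \<subseteq> Omega \<and> locally_determined A"
    using A unfolding Int_iff lower_sets_iff locally_determined_def by blast
next
  assume "A \<subseteq> Omega \<and> locally_determined A"
  then show "A \<in> lower_sets \<inter> upper_sets"
    unfolding Int_iff lower_sets_iff upper_sets_iff locally_determined_def by blast
qed

lemma cylinders_iff_determined:
  "A \<in> cylinders \<longleftrightarrow> A \<subseteq> Omega \<and> (\<exists>n. determined_by n A)"
proof
  assume "A \<in> cylinders"
  then obtain n E where A: "A = {\<omega>\<in>Omega. map \<omega> [0..<Suc n] \<in> E}"
    unfolding cylinders_def by blast
  have "determined_by n A"
    unfolding determined_by_def
  proof (intro ballI impI)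
    fix \<omega> \<omega>' :: "nat \<Rightarrow> bool"
    assume "\<omega> \<in> Omega" "\<omega>' \<in> Omega" "agree_upto n \<omega>' \<omega>"
    then have "map \<omega>' [0..<Suc n] = map \<omega> [0..<Suc n]"
      by (simp only: map_upt_eq_iff_agree_upto)
    then show "\<omega>' \<in> A \<longleftrightarrow> \<omega> \<in> A"
      unfolding A using \<open>\<omega> \<in> Omega\<close> \<open>\<omega>' \<in> Omega\<close> by (simp only: mem_Collect_eq)
  qed
  then show "A \<subseteq> Omega \<and> (\<exists>n. determined_by n A)"
    using A by blast
next
  assume "A \<subseteq> Omega \<and> (\<exists>n. determined_by n A)"
  then obtain n where "A \<subseteq> Omega" "determined_by n A" "n \<ge> 1"
    by (metis determined_by_mono max.cobounded1 max.cobounded2)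
  define E where "E = (\<lambda>\<omega>. map \<omega> [0..<Suc n]) ` A"
  have "A = {\<omega>\<in>Omega. map \<omega> [0..<Suc n] \<in> E}"
  proof
    show "A \<subseteq> {\<omega>\<in>Omega. map \<omega> [0..<Suc n] \<in> E}"
      using \<open>A \<subseteq> Omega\<close> unfolding E_def by blast
  next
    show "{\<omega>\<in>Omega. map \<omega> [0..<Suc n] \<in> E} \<subseteq> A"
    proof
      fix \<omega> assume "\<omega> \<in> {\<omega>\<in>Omega. map \<omega> [0..<Suc n] \<in> E}"
      then obtain \<omega>' where "\<omega> \<in> Omega" "\<omega>' \<in> A" "agree_upto n \<omega> \<omega>'"
        unfolding E_def image_iff mem_Collect_eq map_upt_eq_iff_agree_upto by blast
      then show "\<omega> \<in> A"
        using \<open>A \<subseteq> Omega\<close> \<open>determined_by n A\<close> unfolding determined_by_def by blast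
    qed
  qed
  moreover have "\<forall>s\<in>E. length s = Suc n \<and> s ! 0 = False"
    using \<open>A \<subseteq> Omega\<close> unfolding E_def Omega_def by (auto simp del: upt_Suc)
  ultimately show "A \<in> cylinders"
    unfolding cylinders_def using \<open>n \<ge> 1\<close> by blast
qed

lemma locally_determined_imp_determined:
  assumes "locally_determined A"
  shows "\<exists>n. determined_by n A"
proof -
  \<comment> \<open>Resetting the first entry extends membership in \<open>A\<close> from \<open>Omega\<close> to all sequences.\<close>
  define P where "P \<omega> \<longleftrightarrow> \<omega>(0 := False) \<in> A" for \<omega>
  have P_Omega: "P \<omega> \<longleftrightarrow> \<omega> \<in> A" if "\<omega> \<in> Omega" for \<omega>
    using that unfolding P_def Omega_def by (simp add: fun_upd_idem)
  have reset_Omega: "\<omega>(0 := False) \<in> Omega" for \<omega>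
    by (simp add: Omega_def)
  have "\<exists>n. \<forall>\<omega>'. agree_upto n \<omega>' \<omega> \<longrightarrow> P \<omega>' = P \<omega>" for \<omega>
  proof -
    obtain n where n: "\<forall>\<omega>'\<in>Omega. agree_upto n \<omega>' (\<omega>(0 := False)) \<longrightarrow> (\<omega>' \<in> A \<longleftrightarrow> P \<omega>)"
      using assms reset_Omega unfolding locally_determined_def P_def by blast
    have "P \<omega>' = P \<omega>" if "agree_upto n \<omega>' \<omega>" for \<omega>'
      using n reset_Omega agree_upto_fun_upd[OF that] unfolding P_def by blast
    then show ?thesis
      by blast
  qed
  then obtain N where "\<forall>\<omega> \<omega>'. agree_upto N \<omega> \<omega>' \<longrightarrow> P \<omega> = P \<omega>'"
    using locally_constant_imp_uniformly_constant by blast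
  then have "determined_by N A"
    unfolding determined_by_def using P_Omega by blast
  then show ?thesis ..
qed

theorem corollary4p3:
  shows "lower_sets \<inter> upper_sets = cylinders \<and>
    (\<forall>A. A \<subseteq> Omega \<and> A \<in> lower_sets \<and> Omega - A \<in> lower_sets \<longrightarrow> A \<in> cylinders)"
proof (intro conjI allI impI)
  have "A \<in> lower_sets \<inter> upper_sets \<longleftrightarrow> A \<in> cylinders" for A
    unfolding lower_upper_iff_locally_determined cylinders_iff_determined
    using locally_determined_imp_determined determined_imp_locally_determined by blast
  then show clopen_eq: "lower_sets \<inter> upper_sets = cylinders"
    by blast
  fix A
  assume A: "A \<subseteq> Omega \<and> A \<in> lower_sets \<and> Omega - A \<in> lower_sets"
  then have "Omega - (Omega - A) \<in> upper_sets"
    using lower_sets_iff_upper_complement by blast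
  moreover have "Omega - (Omega - A) = A"
    using A by blast
  ultimately show "A \<in> cylinders"
    using A clopen_eq by auto
qed

end
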